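(* Let $N, F$ be positive integers with $F < N/2$, and let $M$ be encoded by a maximum-distance-separable code into $(F+1)N$ distinct fragments, any $F+1$ of which reconstruct $M$, partitioned into pairwise disjoint pools $S_1,\dots,S_N$ of size $F+1$, node $j$ storing only fragments from $S_j$. For an integer $x > F$ define the pruning rule $r(x) = \left\lceil \frac{F+1}{x-F} \right\rceil$. Let $Q \subseteq \{1,\dots,N\}$ be a set of nodes with $|Q| > F$ such that, before pruning, every node $u \in Q$ stores at least $r(|Q|)$ distinct fragments of $S_u$. Suppose each node $u$ prunes autonomously using some local value $q_u$ with $F < q_u \le |Q|$, i.e., it discards fragments until it retains exactly $\min(h_u, r(q_u))$ of them, where $h_u$ is the number it stored before pruning (different nodes may use different $q_u$). Then for every set $C$ of at most $F$ crashed nodes, the nodes of $Q \setminus C$ together still store at least $F+1$ distinct fragments of $M$ after pruning; hence $M$ remains reconstructable.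
   Context: $\lceil\cdot\rceil$ denotes the ceiling function. A crashed node loses all its fragments. The local value $q_u$ models a node's (possibly outdated) knowledge of how many nodes are known to store fragments of $M$. *)

theory Defs
  imports Complex_Main
begin

definition prune_rule :: "nat \<Rightarrow> nat \<Rightarrow> nat" where
  "prune_rule F x = nat \<lceil>(real F + 1) / (real x - real F)\<rceil>"

end

theory Submission
  imports Defs
begin

text \<open>Since \<open>q\<^sub>u \<le> |Q|\<close> and the pruning rule is antitone, every node of \<open>Q\<close> retains at least
  \<open>r(|Q|)\<close> fragments, and fragments of distinct nodes are distinct because the pools are
  disjoint. At most \<open>F\<close> crashes leave at least \<open>|Q| - F\<close> nodes of \<open>Q\<close> alive, and
  \<open>(|Q| - F) \<cdot> r(|Q|) \<ge> F + 1\<close> is exactly what the ceiling in \<open>r\<close> guarantees.\<close>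

lemma prune_rule_antimono:
  assumes "F < a" "a \<le> b"
  shows "prune_rule F b \<le> prune_rule F a"
proof -
  have "(real F + 1) / (real b - real F) \<le> (real F + 1) / (real a - real F)"
    using assms by (intro divide_left_mono) auto
  then show ?thesis
    unfolding prune_rule_def by (intro nat_mono ceiling_mono)
qed

lemma prune_rule_covers:
  assumes "F < k"
  shows "F + 1 \<le> (k - F) * prune_rule F k"
proof -
  have "(real F + 1) / (real k - real F) \<le> real (prune_rule F k)"
    unfolding prune_rule_def by (rule real_nat_ceiling_ge)
  then have "real F + 1 \<le> real (prune_rule F k) * (real k - real F)"
    using assms by (simp add: divide_le_eq)
  then have "real (F + 1) \<le> real ((k - F) * prune_rule F k)"
    using assms by (simp add: of_nat_diff algebra_simps)
  then show ?thesis
    by linarith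
qed

lemma card_UN_subsets_of_disjoint_ge:
  assumes "finite I" "\<forall>i\<in>I. finite (S i)"
    and "\<forall>i\<in>I. \<forall>j\<in>I. i \<noteq> j \<longrightarrow> S i \<inter> S j = {}"
    and "\<forall>i\<in>I. A i \<subseteq> S i" "\<forall>i\<in>I. r \<le> card (A i)"
  shows "card I * r \<le> card (\<Union>i\<in>I. A i)"
proof -
  have "card I * r = (\<Sum>i\<in>I. r)"
    by simp
  also have "\<dots> \<le> (\<Sum>i\<in>I. card (A i))"
    using assms(5) by (intro sum_mono) blast
  also have "\<dots> = card (\<Union>i\<in>I. A i)"
  proof (rule card_UN_disjoint[symmetric])
    show "\<forall>i\<in>I. finite (A i)"
      using assms(2,4) finite_subset by blast
    show "\<forall>i\<in>I. \<forall>j\<in>I. i \<noteq> j \<longrightarrow> A i \<inter> A j = {}"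
      using assms(3,4) by blast
  qed fact
  finally show ?thesis .
qed

theorem mainTheorem2:
  fixes N F :: nat
    and S :: "nat \<Rightarrow> 'frag set"
    and stored retained :: "nat \<Rightarrow> 'frag set"
    and q :: "nat \<Rightarrow> nat"
    and Q C :: "nat set"
  assumes "N > 0" and "F > 0" and "real F < real N / 2"
    and pools_fin: "\<forall>j\<in>{1..N}. finite (S j) \<and> card (S j) = F + 1"
    and pools_disj: "\<forall>i\<in>{1..N}. \<forall>j\<in>{1..N}. i \<noteq> j \<longrightarrow> S i \<inter> S j = {}"
    and stored_sub: "\<forall>j\<in>{1..N}. stored j \<subseteq> S j"
    and Q_sub: "Q \<subseteq> {1..N}" and Q_card: "card Q > F"
    and Q_stored: "\<forall>u\<in>Q. card (stored u) \<ge> prune_rule F (card Q)"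
    and q_bounds: "\<forall>u\<in>Q. F < q u \<and> q u \<le> card Q"
    and retained_sub: "\<forall>u\<in>Q. retained u \<subseteq> stored u"
    and retained_card: "\<forall>u\<in>Q. card (retained u) = min (card (stored u)) (prune_rule F (q u))"
    and C_sub: "C \<subseteq> {1..N}" and C_card: "card C \<le> F"
  shows "card (\<Union>u\<in>Q - C. retained u) \<ge> F + 1"
proof -
  have retains_enough: "\<forall>u\<in>Q - C. prune_rule F (card Q) \<le> card (retained u)"
  proof
    fix u assume "u \<in> Q - C"
    then have "prune_rule F (card Q) \<le> prune_rule F (q u)"
      using q_bounds by (auto intro: prune_rule_antimono)
    then show "prune_rule F (card Q) \<le> card (retained u)"
      using \<open>u \<in> Q - C\<close> Q_stored retained_card by auto
  qed
  have "finite C"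
    using C_sub finite_subset by blast
  then have survivors: "card Q - F \<le> card (Q - C)"
    using diff_card_le_card_Diff[of C Q] C_card by linarith
  have "F + 1 \<le> (card Q - F) * prune_rule F (card Q)"
    using Q_card by (rule prune_rule_covers)
  also have "\<dots> \<le> card (Q - C) * prune_rule F (card Q)"
    using survivors by simp
  also have "\<dots> \<le> card (\<Union>u\<in>Q - C. retained u)"
  proof (rule card_UN_subsets_of_disjoint_ge[where S = S])
    have alive: "Q - C \<subseteq> {1..N}"
      using Q_sub by blast
    then show "finite (Q - C)"
      using finite_subset by blast
    show "\<forall>u\<in>Q - C. finite (S u)"
      using alive pools_fin by blast
    show "\<forall>i\<in>Q - C. \<forall>j\<in>Q - C. i \<noteq> j \<longrightarrow> S i \<inter> S j = {}"
      using alive pools_disj by blast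
    show "\<forall>u\<in>Q - C. retained u \<subseteq> S u"
      using alive retained_sub stored_sub by blast
  qed (rule retains_enough)
  finally show ?thesis .
qed

end
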